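(* Let $\psi$ be a CNF formula with only positive literals, with clauses $C_1,\dots,C_m$ each consisting of three distinct variables, and variables $x_1,\dots,x_p$, in which every variable appears in at least $3$ clauses. Let $G$ be the graph constructed as follows: (1) for each variable $x_i$ create a cycle $D_i$ whose number of vertices equals the number of clauses containing $x_i$; (2) add a vertex $a$ adjacent to every vertex of all cycles $D_1,\dots,D_p$; (3) for each clause $\{x_i,x_j,x_k\}$ add a vertex $u_{ijk}$ adjacent to one vertex of each of $D_i,D_j,D_k$, choosing in each cycle a vertex not yet adjacent to any clause-vertex; (4) subdivide once every edge of the cycles $D_1,\dots,D_p$ and every edge incident to $a$. If $\psi$ has an assignment in which every clause contains exactly one true variable, then $G$ has a $1/2$-shallow topological minor of density $\frac{5m}{2m+1}$.
   Context: A graph $H$ is a $1/2$-shallow topological minor of $G$ if some graph obtained from $H$ by subdividing each edge at most once is isomorphic to a subgraph of $G$. The density of $H$ is $\|H\|/|H|$ (number of edges divided by number of vertices). *)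

theory Defs
  imports Complex_Main
begin

definition simple_graph :: "'a set \<Rightarrow> 'a set set \<Rightarrow> bool" where
  "simple_graph V E \<longleftrightarrow> finite V \<and> (\<forall>e\<in>E. e \<subseteq> V \<and> card e = 2)"

(* H = (VH,EH) is a 1/2-shallow topological minor of G = (VG,EG): a graph obtained
   from H by subdividing each edge at most once is isomorphic to a subgraph of G. *)
definition half_shallow_top_minor ::
  "'b set \<Rightarrow> 'b set set \<Rightarrow> 'a set \<Rightarrow> 'a set set \<Rightarrow> bool" where
  "half_shallow_top_minor VH EH VG EG \<longleftrightarrow> simple_graph VH EH \<and>
     (\<exists>(\<phi>::'b \<Rightarrow> 'a) (s::'b set \<Rightarrow> 'a option).
        inj_on \<phi> VH \<and> \<phi> ` VH \<subseteq> VG \<and>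
        (\<forall>e\<in>EH. \<forall>u v. e = {u, v} \<longrightarrow>
           (case s e of
              None \<Rightarrow> {\<phi> u, \<phi> v} \<in> EG
            | Some w \<Rightarrow> w \<in> VG - \<phi> ` VH \<and> {\<phi> u, w} \<in> EG \<and> {w, \<phi> v} \<in> EG)) \<and>
        inj_on s {e \<in> EH. s e \<noteq> None})"

definition density :: "'b set \<Rightarrow> 'b set set \<Rightarrow> real" where
  "density V E = real (card E) / real (card V)"

(* Vertices of the constructed graph G:
   A         the vertex a
   Cyc i k   k-th vertex of the cycle D_i (k < d_i)
   Cl j      the clause vertex u for clause C_j
   SubC i k  subdivision vertex of cycle edge Cyc i k -- Cyc i ((k+1) mod d_i)
   SubA i k  subdivision vertex of edge A -- Cyc i k *)
datatype vtx = A | Cyc nat nat | Cl nat | SubC nat nat | SubA nat nat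

definition occ :: "nat \<Rightarrow> (nat \<Rightarrow> nat set) \<Rightarrow> nat \<Rightarrow> nat" where
  "occ m C i = card {j. j < m \<and> i \<in> C j}"

definition GV :: "nat \<Rightarrow> nat \<Rightarrow> (nat \<Rightarrow> nat set) \<Rightarrow> vtx set" where
  "GV p m C = {A} \<union> {Cyc i k | i k. i < p \<and> k < occ m C i} \<union> {Cl j | j. j < m}
     \<union> {SubC i k | i k. i < p \<and> k < occ m C i} \<union> {SubA i k | i k. i < p \<and> k < occ m C i}"

definition GE :: "nat \<Rightarrow> nat \<Rightarrow> (nat \<Rightarrow> nat set) \<Rightarrow> (nat \<Rightarrow> nat \<Rightarrow> nat) \<Rightarrow> vtx set set" where
  "GE p m C \<sigma> =
     {{Cyc i k, SubC i k} | i k. i < p \<and> k < occ m C i}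
   \<union> {{SubC i k, Cyc i ((k + 1) mod occ m C i)} | i k. i < p \<and> k < occ m C i}
   \<union> {{A, SubA i k} | i k. i < p \<and> k < occ m C i}
   \<union> {{SubA i k, Cyc i k} | i k. i < p \<and> k < occ m C i}
   \<union> {{Cl j, Cyc i (\<sigma> i j)} | i j. j < m \<and> i \<in> C j}"

end

theory Submission
  imports Defs
begin

text \<open>Let \<open>T\<close> be the set of true variables and keep, as branch vertices, \<open>a\<close> and the cycles
  \<open>D\<^sub>i\<close> of the false variables. As every clause has exactly two false variables, these cycles have
  \<open>2m\<close> vertices in total. Every edge of \<open>H\<close> is realised by a path of length two through a
  distinct vertex of \<open>G\<close>: the \<open>2m\<close> subdivision vertices of the cycle edges, the \<open>2m\<close> subdivision
  vertices of the edges to \<open>a\<close>, and the \<open>m\<close> clause vertices, each of which joins the cycles of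
  its two false variables. Hence \<open>H\<close> has \<open>2m + 1\<close> vertices and \<open>5m\<close> edges.\<close>

lemma half_shallow_top_minor_of_paths:
  fixes ends :: "'a \<Rightarrow> 'a set"
  assumes "finite V" "V \<subseteq> VG" "inj_on ends W"
    and ends: "\<And>w. w \<in> W \<Longrightarrow> ends w \<subseteq> V \<and> card (ends w) = 2"
    and outside: "W \<subseteq> VG - V"
    and adjacent: "\<And>w x. w \<in> W \<Longrightarrow> x \<in> ends w \<Longrightarrow> {w, x} \<in> EG"
  shows "half_shallow_top_minor V (ends ` W) VG EG"
  unfolding half_shallow_top_minor_def
proof (intro conjI exI)
  show "simple_graph V (ends ` W)"
    using assms(1) ends by (auto simp: simple_graph_def)
  let ?s = "\<lambda>e. Some (inv_into W ends e)"
  show "\<forall>e\<in>ends ` W. \<forall>u v. e = {u, v} \<longrightarrow>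
      (case ?s e of None \<Rightarrow> {id u, id v} \<in> EG
       | Some w \<Rightarrow> w \<in> VG - id ` V \<and> {id u, w} \<in> EG \<and> {w, id v} \<in> EG)"
  proof (intro ballI allI impI)
    fix e u v
    assume "e \<in> ends ` W" "e = {u, v}"
    then obtain w where w: "w \<in> W" "ends w = {u, v}" and "ends w = e"
      by blast
    have "?s e = Some w"
      using inv_into_f_f[OF assms(3) w(1)] \<open>ends w = e\<close> by simp
    then show "case ?s e of None \<Rightarrow> {id u, id v} \<in> EG
       | Some w \<Rightarrow> w \<in> VG - id ` V \<and> {id u, w} \<in> EG \<and> {w, id v} \<in> EG"
      using w outside adjacent[of w] by (auto simp: insert_commute)
  qed
  show "inj_on ?s {e \<in> ends ` W. ?s e \<noteq> None}"
    by (auto intro!: inj_onI dest: inv_into_injective)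
qed (use assms(2) in auto)

lemma cycle_edge_eqD:
  fixes d k k' :: nat
  assumes "2 < d" "k < d" "k' < d" "{k, (k + 1) mod d} = {k', (k' + 1) mod d}"
  shows "k = k'"
proof (rule ccontr)
  assume "k \<noteq> k'"
  then have "k = (k' + 1) mod d" "k' = (k + 1) mod d"
    using assms(4) by (auto simp: doubleton_eq_iff)
  then have "(k + 2) mod d = k mod d"
    using assms(2) by (simp add: mod_Suc_eq)
  then have "d dvd 2"
    by (simp add: mod_eq_dvd_iff_nat)
  then show False
    using assms(1) by (simp add: nat_dvd_not_less)
qed

lemma sum_card_occurrences:
  fixes C :: "nat \<Rightarrow> 'a set"
  assumes "finite F"
  shows "(\<Sum>i\<in>F. card {j. j < m \<and> i \<in> C j}) = (\<Sum>j<m. card (C j \<inter> F))"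
proof -
  have "(\<Sum>i\<in>F. card {j. j < m \<and> i \<in> C j}) = (\<Sum>i\<in>F. \<Sum>j<m. of_bool (i \<in> C j))"
    by (simp add: Int_def)
  also have "\<dots> = (\<Sum>j<m. \<Sum>i\<in>F. of_bool (i \<in> C j))"
    by (rule sum.swap)
  also have "\<dots> = (\<Sum>j<m. card (C j \<inter> F))"
    using assms by (simp add: Int_def conj_commute)
  finally show ?thesis .
qed

lemma GE_cycle_edges:
  assumes "i < p" "k < occ m C i"
  shows "{SubC i k, Cyc i k} \<in> GE p m C \<sigma>"
    and "{SubC i k, Cyc i ((k + 1) mod occ m C i)} \<in> GE p m C \<sigma>"
proof -
  have "{Cyc i k, SubC i k} \<in> GE p m C \<sigma>"
    using assms unfolding GE_def by blast
  then show "{SubC i k, Cyc i k} \<in> GE p m C \<sigma>"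
    by (simp add: insert_commute)
  show "{SubC i k, Cyc i ((k + 1) mod occ m C i)} \<in> GE p m C \<sigma>"
    using assms unfolding GE_def by blast
qed

lemma GE_apex_edges:
  assumes "i < p" "k < occ m C i"
  shows "{SubA i k, A} \<in> GE p m C \<sigma>" and "{SubA i k, Cyc i k} \<in> GE p m C \<sigma>"
proof -
  have "{A, SubA i k} \<in> GE p m C \<sigma>"
    using assms unfolding GE_def by blast
  then show "{SubA i k, A} \<in> GE p m C \<sigma>"
    by (simp add: insert_commute)
  show "{SubA i k, Cyc i k} \<in> GE p m C \<sigma>"
    using assms unfolding GE_def by blast
qed

lemma GE_clause_edge: "j < m \<Longrightarrow> i \<in> C j \<Longrightarrow> {Cl j, Cyc i (\<sigma> i j)} \<in> GE p m C \<sigma>"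
  unfolding GE_def by blast

locale exact_one_assignment =
  fixes p m :: nat and C :: "nat \<Rightarrow> nat set" and \<sigma> :: "nat \<Rightarrow> nat \<Rightarrow> nat" and T :: "nat set"
  assumes clause_vars: "j < m \<Longrightarrow> C j \<subseteq> {..<p}"
    and card_clause: "j < m \<Longrightarrow> card (C j) = 3"
    and occ_ge_3: "i < p \<Longrightarrow> 3 \<le> occ m C i"
    and attach: "i < p \<Longrightarrow> bij_betw (\<sigma> i) {j. j < m \<and> i \<in> C j} {..<occ m C i}"
    and exactly_one_true: "j < m \<Longrightarrow> card (C j \<inter> T) = 1"
begin

definition false_slots :: "(nat \<times> nat) set" where
  "false_slots = (SIGMA i:{..<p} - T. {..<occ m C i})"

definition branch_vertices :: "vtx set" where
  "branch_vertices = insert A ((\<lambda>(i, k). Cyc i k) ` false_slots)"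

definition path_vertices :: "vtx set" where
  "path_vertices = (\<lambda>(i, k). SubA i k) ` false_slots \<union> (\<lambda>(i, k). SubC i k) ` false_slots
     \<union> Cl ` {..<m}"

text \<open>\<open>path_ends w\<close> are the two branch vertices joined through \<open>w \<in> path_vertices\<close>;
  the values at \<open>A\<close> and \<open>Cyc\<close> are never used.\<close>

primrec path_ends :: "vtx \<Rightarrow> vtx set" where
  "path_ends A = {}"
| "path_ends (Cyc i k) = {}"
| "path_ends (Cl j) = (\<lambda>i. Cyc i (\<sigma> i j)) ` (C j - T)"
| "path_ends (SubC i k) = {Cyc i k, Cyc i ((k + 1) mod occ m C i)}"
| "path_ends (SubA i k) = {A, Cyc i k}"

lemma finite_false_slots: "finite false_slots"
  by (simp add: false_slots_def)

lemma false_slotsD: "(i, k) \<in> false_slots \<Longrightarrow> i < p \<and> i \<notin> T \<and> k < occ m C i"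
  by (simp add: false_slots_def)

lemma false_slot_succ: "(i, k) \<in> false_slots \<Longrightarrow> (i, (k + 1) mod occ m C i) \<in> false_slots"
  by (simp add: false_slots_def)

lemma attached_false_slot:
  assumes "j < m" "i \<in> C j - T"
  shows "(i, \<sigma> i j) \<in> false_slots"
proof -
  have "i < p"
    using assms clause_vars by blast
  then show ?thesis
    using assms attach[of i] by (auto simp: false_slots_def bij_betw_def)
qed

lemma clause_false_pair:
  assumes "j < m"
  obtains i i' where "i \<noteq> i'" "C j - T = {i, i'}"
proof -
  have "finite (C j)"
    using card_clause[OF assms] by (intro card_ge_0_finite) simp
  then have "card (C j - T) = 2"
    using card_clause[OF assms] exactly_one_true[OF assms] by (simp add: card_Diff_subset_Int)
  then show ?thesis
    using that by (auto simp: card_2_iff)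
qed

lemma card_false_slots: "card false_slots = 2 * m"
proof -
  have "card false_slots = (\<Sum>i\<in>{..<p} - T. occ m C i)"
    by (simp add: false_slots_def card_SigmaI)
  also have "\<dots> = (\<Sum>j<m. card (C j \<inter> ({..<p} - T)))"
    unfolding occ_def by (simp add: sum_card_occurrences)
  also have "\<dots> = (\<Sum>j<m. 2)"
  proof (rule sum.cong)
    fix j
    assume "j \<in> {..<m}"
    then obtain i i' where "i \<noteq> i'" "C j - T = {i, i'}"
      using clause_false_pair by blast
    moreover have "C j \<inter> ({..<p} - T) = C j - T"
      using \<open>j \<in> {..<m}\<close> clause_vars by auto
    ultimately show "card (C j \<inter> ({..<p} - T)) = 2"
      by simp
  qed simp
  finally show ?thesis
    by simp
qed

lemma card_branch_vertices: "card branch_vertices = 2 * m + 1"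
proof -
  have "inj_on (\<lambda>(i, k). Cyc i k) false_slots"
    by (auto simp: inj_on_def)
  moreover have "A \<notin> (\<lambda>(i, k). Cyc i k) ` false_slots"
    by auto
  ultimately show ?thesis
    using finite_false_slots card_false_slots by (simp add: branch_vertices_def card_image)
qed

lemma card_path_vertices: "card path_vertices = 5 * m"
proof -
  have "inj_on (\<lambda>(i, k). SubA i k) false_slots" "inj_on (\<lambda>(i, k). SubC i k) false_slots"
    by (auto simp: inj_on_def)
  then have "card ((\<lambda>(i, k). SubA i k) ` false_slots) = 2 * m"
    "card ((\<lambda>(i, k). SubC i k) ` false_slots) = 2 * m"
    using card_false_slots by (simp_all add: card_image)
  moreover have "card (Cl ` {..<m}) = m"
    by (simp add: card_image inj_on_def)
  ultimately show ?thesis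
    using finite_false_slots unfolding path_vertices_def
    by (subst card_Un_disjoint; auto simp: card_Un_disjoint)+
qed

lemma path_verticesE:
  assumes "w \<in> path_vertices"
  obtains (SubA) i k where "(i, k) \<in> false_slots" "w = SubA i k"
  | (SubC) i k where "(i, k) \<in> false_slots" "w = SubC i k"
  | (Cl) j where "j < m" "w = Cl j"
  using assms by (auto simp: path_vertices_def)

lemma branch_vertices_subset: "branch_vertices \<subseteq> GV p m C"
  by (auto simp: branch_vertices_def GV_def dest: false_slotsD)

lemma path_vertices_subset: "path_vertices \<subseteq> GV p m C - branch_vertices"
  by (auto simp: path_vertices_def branch_vertices_def GV_def dest: false_slotsD)

lemma path_ends_subset:
  assumes "w \<in> path_vertices"
  shows "path_ends w \<subseteq> branch_vertices"
  using assms
proof (cases rule: path_verticesE)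
  case (SubC i k)
  then show ?thesis
    using false_slot_succ[of i k] by (force simp: branch_vertices_def)
next
  case (Cl j)
  then show ?thesis
    using attached_false_slot[of j] by (force simp: branch_vertices_def)
qed (force simp: branch_vertices_def)

lemma card_path_ends:
  assumes "w \<in> path_vertices"
  shows "card (path_ends w) = 2"
  using assms
proof (cases rule: path_verticesE)
  case (SubC i k)
  then have "2 < occ m C i" "k < occ m C i"
    using false_slotsD occ_ge_3 by fastforce+
  then have "(k + 1) mod occ m C i \<noteq> k"
    by (cases "k + 1 < occ m C i") (auto simp: mod_if)
  then show ?thesis
    using SubC by simp
next
  case (Cl j)
  then obtain i i' where "i \<noteq> i'" "C j - T = {i, i'}"
    using clause_false_pair by blast
  then show ?thesis
    using Cl by simp
qed simp

lemma path_ends_adjacent: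
  assumes "w \<in> path_vertices" "x \<in> path_ends w"
  shows "{w, x} \<in> GE p m C \<sigma>"
  using assms(1)
proof (cases rule: path_verticesE)
  case (SubA i k)
  then show ?thesis
    using assms(2) false_slotsD GE_apex_edges by auto
next
  case (SubC i k)
  then show ?thesis
    using assms(2) false_slotsD GE_cycle_edges by auto
next
  case (Cl j)
  then show ?thesis
    using assms(2) GE_clause_edge by auto
qed

lemma cycle_path_ends_eqD:
  assumes "(i, k) \<in> false_slots" "(i', k') \<in> false_slots"
    and eq: "path_ends (SubC i k) = path_ends (SubC i' k')"
  shows "i = i' \<and> k = k'"
proof -
  have "i = i'"
    using eq by (auto simp: doubleton_eq_iff)
  moreover have "2 < occ m C i" "k < occ m C i" "k' < occ m C i"
    using assms(1,2) false_slotsD occ_ge_3 \<open>i = i'\<close> by fastforce+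
  moreover have "{k, (k + 1) mod occ m C i} = {k', (k' + 1) mod occ m C i}"
    using eq \<open>i = i'\<close> by (auto simp: doubleton_eq_iff)
  ultimately show ?thesis
    using cycle_edge_eqD by blast
qed

lemma clause_path_ends_eqD:
  assumes "j < m" "j' < m" "path_ends (Cl j) = path_ends (Cl j')"
  shows "j = j'"
proof -
  obtain i i' where "C j - T = {i, i'}"
    using clause_false_pair[OF assms(1)] by blast
  then have "Cyc i (\<sigma> i j) \<in> path_ends (Cl j)"
    by simp
  then have "Cyc i (\<sigma> i j) \<in> path_ends (Cl j')"
    unfolding assms(3) .
  then have "i \<in> C j'" "\<sigma> i j' = \<sigma> i j"
    by auto
  moreover have "i \<in> C j" "i < p"
    using \<open>C j - T = {i, i'}\<close> clause_vars[OF assms(1)] by auto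
  ultimately show ?thesis
    using attach[of i] assms(1,2) by (auto simp: bij_betw_def inj_on_def)
qed

lemma clause_path_ends_neq_cycle:
  assumes "j < m"
  shows "path_ends (Cl j) \<noteq> path_ends (SubC i k)"
proof -
  obtain i1 i2 where "i1 \<noteq> i2" "C j - T = {i1, i2}"
    using clause_false_pair[OF assms] by blast
  then show ?thesis
    by (auto simp: doubleton_eq_iff)
qed

lemma inj_on_path_ends: "inj_on path_ends path_vertices"
proof (rule inj_onI)
  fix w w'
  assume w: "w \<in> path_vertices" and w': "w' \<in> path_vertices"
    and eq: "path_ends w = path_ends w'"
  from w show "w = w'"
  proof (cases rule: path_verticesE)
    case (SubA i k)
    from w' show ?thesis
      by (cases rule: path_verticesE) (use eq SubA in \<open>auto simp: doubleton_eq_iff\<close>)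
  next
    case (SubC i k)
    from w' show ?thesis
      by (cases rule: path_verticesE)
        (use eq SubC cycle_path_ends_eqD clause_path_ends_neq_cycle[symmetric] in auto)
  next
    case (Cl j)
    from w' show ?thesis
      by (cases rule: path_verticesE)
        (use eq Cl clause_path_ends_eqD clause_path_ends_neq_cycle in auto)
  qed
qed

theorem half_shallow_top_minor_false_cycles:
  "half_shallow_top_minor branch_vertices (path_ends ` path_vertices) (GV p m C) (GE p m C \<sigma>)"
  by (rule half_shallow_top_minor_of_paths)
    (use finite_false_slots branch_vertices_subset inj_on_path_ends path_ends_subset card_path_ends
      path_vertices_subset path_ends_adjacent in \<open>auto simp: branch_vertices_def\<close>)

lemma density_false_cycles:
  "density branch_vertices (path_ends ` path_vertices) = 5 * real m / (2 * real m + 1)"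
  using inj_on_path_ends card_path_vertices card_branch_vertices
  by (simp add: density_def card_image)

end

theorem lemma2:
  fixes p m :: nat and C :: "nat \<Rightarrow> nat set" and \<sigma> :: "nat \<Rightarrow> nat \<Rightarrow> nat"
  assumes clauses: "\<forall>j<m. C j \<subseteq> {..<p} \<and> card (C j) = 3"
    and occ3: "\<forall>i<p. occ m C i \<ge> 3"
    and attach: "\<forall>i<p. bij_betw (\<sigma> i) {j. j < m \<and> i \<in> C j} {..<occ m C i}"
    and exact1: "\<exists>T \<subseteq> {..<p}. \<forall>j<m. card (C j \<inter> T) = 1"
  shows "\<exists>(VH :: vtx set) EH. VH \<noteq> {} \<and> half_shallow_top_minor VH EH (GV p m C) (GE p m C \<sigma>)
           \<and> density VH EH = 5 * real m / (2 * real m + 1)"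
proof -
  obtain T where "\<forall>j<m. card (C j \<inter> T) = 1"
    using exact1 by blast
  then interpret exact_one_assignment p m C \<sigma> T
    using clauses occ3 attach by unfold_locales auto
  show ?thesis
  proof (intro exI conjI)
    show "branch_vertices \<noteq> {}"
      by (simp add: branch_vertices_def)
  qed (fact half_shallow_top_minor_false_cycles density_false_cycles)+
qed

end
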